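(* If $x\in\mathrm{Sort}_n(132,321)$, then $x$ avoids the pattern $123$.
   Context: A permutation contains a pattern $p$ if it has a subsequence order-isomorphic to $p$; otherwise it avoids $p$. For a set $T$ of patterns, the map $s_T$ is defined as follows: the entries of the input permutation are read from left to right, with an initially empty stack. At each step, if the input is nonempty and pushing the next input entry onto the stack produces a stack whose contents, read from top to bottom, avoid every pattern in $T$, that entry is pushed; otherwise the top entry of the stack is popped and appended to the output. When the input is exhausted, the remaining stack entries are popped one at a time to the output. Write $s_{\sigma,\tau}=s_{\{\sigma,\tau\}}$ and $s=s_{\{21\}}$ (West's stack-sorting map). $\mathrm{Sort}_n(\sigma,\tau)$ is the set of $x\in S_n$ with $s(s_{\sigma,\tau}(x))=12\cdots n$. *)

theory Defs
  imports Main
begin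

definition perms :: "nat \<Rightarrow> nat list set" where
  "perms n = {x. distinct x \<and> set x = {1..n}}"

definition order_iso :: "nat list \<Rightarrow> nat list \<Rightarrow> bool" where
  "order_iso xs ys \<longleftrightarrow> length xs = length ys \<and>
     (\<forall>i<length xs. \<forall>j<length xs. (xs ! i < xs ! j) = (ys ! i < ys ! j))"

definition contains :: "nat list \<Rightarrow> nat list \<Rightarrow> bool" where
  "contains x p \<longleftrightarrow> (\<exists>I. order_iso (nths x I) p)"

definition avoids :: "nat list \<Rightarrow> nat list \<Rightarrow> bool" where
  "avoids x p \<longleftrightarrow> \<not> contains x p"

definition avoids_all :: "nat list set \<Rightarrow> nat list \<Rightarrow> bool" where
  "avoids_all T x \<longleftrightarrow> (\<forall>p\<in>T. avoids x p)"

text \<open>Stack machine: input, stack (head = top); returns the output word.  The branch for an empty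
  stack with a forbidden push cannot occur when all patterns have length at least 2.\<close>
fun stack_run :: "nat list set \<Rightarrow> nat list \<Rightarrow> nat list \<Rightarrow> nat list" where
  "stack_run T [] st = st"
| "stack_run T (a # inp) st =
     (if avoids_all T (a # st) then stack_run T inp (a # st)
      else (case st of [] \<Rightarrow> stack_run T inp [a]
                     | b # st' \<Rightarrow> b # stack_run T (a # inp) st'))"

definition s_map :: "nat list set \<Rightarrow> nat list \<Rightarrow> nat list" where
  "s_map T x = stack_run T x []"

definition west_s :: "nat list \<Rightarrow> nat list" where
  "west_s x = s_map {[2,1]} x"

definition Sort2 :: "nat \<Rightarrow> nat list \<Rightarrow> nat list \<Rightarrow> nat list set" where
  "Sort2 n \<sigma> \<tau> = {x \<in> perms n. west_s (s_map {\<sigma>, \<tau>} x) = [1..<n+1]}"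

end

theory Submission
  imports Defs "HOL-Library.Sublist"
begin

(* Let T = {132, 321} and suppose x contains 123 at entries a < b < c.  While input
   remains, the T-stack never loses its minimum: a push is blocked by a pattern d y z
   with z < y, and as the stack t s avoids 132 and 321, some entry of s is below the
   top t, so popping t keeps a smaller entry.  Hence when b is pushed some a' <= a lies
   below it; pushing c while b still lies above a' would create 321, so b is output
   before c is pushed, while an entry a'' <= a' stays in the stack and is output
   after c.  Thus s_T(x) contains the 231 occurrence b c a''.  West's stack sort never
   sorts a word containing 231 at u v w: u must be popped before v is pushed, hence
   before w. *)

lemma contains_iff_subseq: "contains s p \<longleftrightarrow> (\<exists>q. subseq q s \<and> order_iso q p)"
  unfolding contains_def subseq_conv_nths by auto

lemma contains_subseq: "subseq q s \<Longrightarrow> order_iso q p \<Longrightarrow> contains s p"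
  unfolding contains_iff_subseq by blast

lemma contains_append: "contains ys p \<Longrightarrow> contains (xs @ ys) p"
  unfolding contains_iff_subseq by (blast intro: list_emb_append2)

lemma order_iso_length: "order_iso q p \<Longrightarrow> length q = length p"
  unfolding order_iso_def by simp

lemma order_iso_2: "order_iso [x, y] [p, q] \<longleftrightarrow> (x < y \<longleftrightarrow> p < q) \<and> (y < x \<longleftrightarrow> q < p)"
  unfolding order_iso_def by (auto simp: less_Suc_eq nth_Cons')

lemma order_iso_3:
  "order_iso [x, y, z] [p, q, r] \<longleftrightarrow>
     (x < y \<longleftrightarrow> p < q) \<and> (y < x \<longleftrightarrow> q < p) \<and> (x < z \<longleftrightarrow> p < r) \<and>
     (z < x \<longleftrightarrow> r < p) \<and> (y < z \<longleftrightarrow> q < r) \<and> (z < y \<longleftrightarrow> r < q)"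
  unfolding order_iso_def by (auto simp: less_Suc_eq nth_Cons' numeral_3_eq_3)

lemma contains_length_3E:
  assumes "contains s [p, q, r]"
  obtains x y z where "subseq [x, y, z] s" "order_iso [x, y, z] [p, q, r]"
proof -
  obtain l where "subseq l s" "order_iso l [p, q, r]"
    using assms unfolding contains_iff_subseq by blast
  moreover from this(2) obtain x y z where "l = [x, y, z]"
    by (auto dest!: order_iso_length simp: length_Suc_conv)
  ultimately show thesis using that by blast
qed

lemma avoids_subseq: "avoids s p \<Longrightarrow> subseq q s \<Longrightarrow> avoids q p"
  unfolding avoids_def contains_iff_subseq by (meson subseq_order.order_trans)

lemma avoids_all_subseq: "avoids_all T s \<Longrightarrow> subseq q s \<Longrightarrow> avoids_all T q"
  unfolding avoids_all_def using avoids_subseq by blast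

lemma avoids_shorter: "length s < length p \<Longrightarrow> avoids s p"
  unfolding avoids_def contains_iff_subseq
  by (metis list_emb_length order_iso_length not_le)

lemma set_subseq: "subseq xs ys \<Longrightarrow> set xs \<subseteq> set ys"
  by (auto elim: list_emb_set)

lemma subseq_Cons_append_notin:
  "subseq (x # xs) (ys @ zs) \<Longrightarrow> x \<notin> set ys \<Longrightarrow> subseq (x # xs) zs"
  by (induction ys) auto

(* The recursive call of this equation sits under a case split on the stack, so the
   simplifier would unfold it forever; stack_run_push and stack_run_pop replace it. *)
declare stack_run.simps(2) [simp del]

lemma stack_run_push:
  "avoids_all T (e # st) \<or> st = [] \<Longrightarrow> stack_run T (e # inp) st = stack_run T inp (e # st)"
  by (subst stack_run.simps(2)) auto

lemma stack_run_pop: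
  "\<not> avoids_all T (e # t # st) \<Longrightarrow> stack_run T (e # inp) (t # st) = t # stack_run T (e # inp) st"
  by (subst stack_run.simps(2)) auto

lemma stack_run_induct [case_names input_exhausted push pop]:
  assumes "\<And>st. P [] st"
    and "\<And>e inp st. avoids_all T (e # st) \<or> st = [] \<Longrightarrow> P inp (e # st) \<Longrightarrow> P (e # inp) st"
    and "\<And>e inp t st. \<not> avoids_all T (e # t # st) \<Longrightarrow> P (e # inp) st \<Longrightarrow> P (e # inp) (t # st)"
  shows "P inp st"
proof -
  have "T' = T \<Longrightarrow> P inp st" for T'
  proof (induction T' inp st rule: stack_run.induct)
    case (1 T' st)
    show ?case by (fact assms(1))
  next
    case (2 T' e inp st)
    show ?case
    proof (cases "avoids_all T (e # st) \<or> st = []")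
      case True
      moreover have "P inp (e # st)"
        using "2.IH"(1,2) "2.prems" True by (cases "avoids_all T (e # st)") auto
      ultimately show ?thesis by (rule assms(2))
    next
      case False
      then obtain t s where st: "st = t # s" by (cases st) auto
      have "P (e # inp) s" using "2.IH"(3) "2.prems" False st by auto
      with False show ?thesis unfolding st by (intro assms(3)) auto
    qed
  qed
  then show ?thesis by simp
qed

lemma set_stack_run: "set (stack_run T inp st) = set inp \<union> set st"
  by (induction inp st rule: stack_run_induct[where T = T]) (auto simp: stack_run_push stack_run_pop)

lemma stack_subseq_stack_run: "subseq st (stack_run T inp st)"
proof (induction inp st rule: stack_run_induct[where T = T])
  case (push e inp st)
  then show ?case by (simp add: stack_run_push subseq_Cons')
qed (simp_all add: stack_run_pop)

(* The configuration just before the first occurrence of d in the input is pushed: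
   popped is the part of the initial stack output by then, rest the part never touched,
   and I is any invariant of the configurations (remaining input, stack). *)
lemma stack_run_split_at_push:
  assumes "d \<in> set inp" "I inp st"
    and inv_push: "\<And>e inp s. I (e # inp) s \<Longrightarrow> avoids_all T (e # s) \<or> s = [] \<Longrightarrow> I inp (e # s)"
    and inv_pop: "\<And>e inp t s. I (e # inp) (t # s) \<Longrightarrow> \<not> avoids_all T (e # t # s) \<Longrightarrow> I (e # inp) s"
  obtains pre post out new rest popped where
    "inp = pre @ d # post" "d \<notin> set pre"
    "stack_run T inp st = out @ stack_run T post (d # new @ rest)"
    "st = popped @ rest" "set popped \<subseteq> set out"
    "avoids_all T (d # new @ rest) \<or> new @ rest = []" "I (d # post) (new @ rest)"
  using assms(1,2)
proof (induction inp st arbitrary: thesis rule: stack_run_induct[where T = T])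
  case (input_exhausted st)
  then show ?case by simp
next
  case (push e inp st)
  have run: "stack_run T (e # inp) st = stack_run T inp (e # st)"
    using push.hyps by (rule stack_run_push)
  have inv: "I inp (e # st)"
    using push.prems(3) push.hyps by (rule inv_push)
  show ?case
  proof (cases "e = d")
    case True
    then show ?thesis
      using push.prems(1)[of "[]" inp "[]" "[]" st "[]"] push.prems(3) push.hyps run by simp
  next
    case False
    then have "d \<in> set inp" using push.prems(2) by simp
    then obtain pre post out popped new rest where IH:
      "inp = pre @ d # post" "d \<notin> set pre"
      "stack_run T inp (e # st) = out @ stack_run T post (d # new @ rest)"
      "e # st = popped @ rest" "set popped \<subseteq> set out"
      "avoids_all T (d # new @ rest) \<or> new @ rest = []" "I (d # post) (new @ rest)"
      using push.IH inv by blast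
    consider "popped = []" "rest = e # st" | p where "popped = e # p" "st = p @ rest"
      using IH(4) by (auto simp: Cons_eq_append_conv)
    then show ?thesis
    proof cases
      case 1
      then show ?thesis
        using push.prems(1)[of "e # pre" post out "new @ [e]" st "[]"] IH False run by auto
    next
      case 2
      then show ?thesis
        using push.prems(1)[of "e # pre" post out new rest p] IH False run by auto
    qed
  qed
next
  case (pop e inp t st)
  have run: "stack_run T (e # inp) (t # st) = t # stack_run T (e # inp) st"
    using pop.hyps by (rule stack_run_pop)
  have "I (e # inp) st"
    using pop.prems(3) pop.hyps by (rule inv_pop)
  then obtain pre post out popped new rest where IH:
    "e # inp = pre @ d # post" "d \<notin> set pre"
    "stack_run T (e # inp) st = out @ stack_run T post (d # new @ rest)"
    "st = popped @ rest" "set popped \<subseteq> set out"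
    "avoids_all T (d # new @ rest) \<or> new @ rest = []" "I (d # post) (new @ rest)"
    using pop.IH pop.prems(2) by blast
  then show ?case
    using pop.prems(1)[of pre post "t # out" new rest "t # popped"] run by auto
qed

abbreviation patterns_132_321 :: "nat list set" where
  "patterns_132_321 \<equiv> {[1, 3, 2], [3, 2, 1]}"

lemma blocked_push_132_321_top_not_min:
  assumes "distinct (t # s)" "avoids_all patterns_132_321 (t # s)"
    and "\<not> avoids_all patterns_132_321 (d # t # s)"
  shows "\<exists>z\<in>set s. z < t"
proof -
  obtain p where p: "p \<in> patterns_132_321" "contains (d # t # s) p"
    using assms(3) unfolding avoids_all_def avoids_def by blast
  then obtain x y z where xyz: "subseq [x, y, z] (d # t # s)" "order_iso [x, y, z] p"
    by (auto elim: contains_length_3E)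
  have zy: "z < y" using xyz(2) p(1) by (auto simp: order_iso_3)
  have avoids_p: "\<not> order_iso q p" if "subseq q (t # s)" for q
    using assms(2) p(1) that contains_subseq unfolding avoids_all_def avoids_def by blast
  then have "\<not> subseq [x, y, z] (t # s)" using xyz(2) by blast
  then have yz: "subseq [y, z] (t # s)" using xyz(1) by (auto split: if_splits)
  show ?thesis
  proof (cases "y = t")
    case True
    then show ?thesis using yz zy by (auto simp: subseq_singleton_left)
  next
    case False
    then have "subseq [y, z] s" using yz by simp
    then have "z \<in> set s" and tyz: "subseq [t, y, z] (t # s)"
      by (auto dest: subseq_Cons' simp: subseq_singleton_left)
    have "\<not> contains (t # s) [1, 3, 2]" "\<not> contains (t # s) [3, 2, 1]"
      using assms(2) unfolding avoids_all_def avoids_def by auto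
    then have "\<not> order_iso [t, y, z] [1, 3, 2]" "\<not> order_iso [t, y, z] [3, 2, 1]"
      using contains_subseq[OF tyz] by blast+
    moreover have "z \<noteq> t" using assms(1) \<open>z \<in> set s\<close> by auto
    ultimately have "z < t" using zy by (auto simp: order_iso_3)
    then show ?thesis using \<open>z \<in> set s\<close> by blast
  qed
qed

lemma stack_run_132_321_split_at_push:
  assumes "d \<in> set inp" "distinct (inp @ st)" "avoids_all patterns_132_321 st"
  obtains pre post out new rest popped where
    "inp = pre @ d # post" "d \<notin> set pre"
    "stack_run patterns_132_321 inp st = out @ stack_run patterns_132_321 post (d # new @ rest)"
    "st = popped @ rest" "set popped \<subseteq> set out"
    "avoids_all patterns_132_321 (d # new @ rest)" "distinct (d # post @ new @ rest)"
    "\<forall>x\<in>set st. \<exists>x'\<in>set (new @ rest). x' \<le> x"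
proof -
  define I where "I inp s \<longleftrightarrow> distinct (inp @ s) \<and> avoids_all patterns_132_321 s \<and>
    (\<forall>x\<in>set st. \<exists>x'\<in>set s. x' \<le> x)" for inp s
  have avoids_singleton: "avoids_all patterns_132_321 [e]" for e
    unfolding avoids_all_def by (auto intro: avoids_shorter)
  have "I inp st" using assms(2,3) unfolding I_def by blast
  moreover have "I inp (e # s)"
    if inv: "I (e # inp) s" and pushed: "avoids_all patterns_132_321 (e # s) \<or> s = []" for e inp s
  proof -
    have "avoids_all patterns_132_321 (e # s)" using pushed avoids_singleton by auto
    then show ?thesis using inv unfolding I_def by simp
  qed
  moreover have "I (e # inp) s"
    if inv: "I (e # inp) (t # s)" and blocked: "\<not> avoids_all patterns_132_321 (e # t # s)" for e inp t s
  proof -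
    have "distinct (t # s)" "avoids_all patterns_132_321 (t # s)" using inv unfolding I_def by auto
    then obtain z where z: "z \<in> set s" "z < t"
      using blocked blocked_push_132_321_top_not_min by blast
    have "\<exists>x'\<in>set s. x' \<le> x" if "x \<in> set st" for x
    proof -
      obtain x' where x': "x' \<in> set (t # s)" "x' \<le> x"
        using inv \<open>x \<in> set st\<close> unfolding I_def by blast
      show ?thesis
      proof (cases "x' = t")
        case True
        then have "z \<le> x" using z(2) x'(2) by simp
        then show ?thesis using z(1) by blast
      next
        case False
        then show ?thesis using x' by auto
      qed
    qed
    moreover have "avoids_all patterns_132_321 s"
      using \<open>avoids_all patterns_132_321 (t # s)\<close> subseq_drop_many[of s s "[t]"]
      by (simp add: avoids_all_subseq)
    ultimately show ?thesis using inv unfolding I_def by simp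
  qed
  ultimately obtain pre post out new rest popped where split:
    "inp = pre @ d # post" "d \<notin> set pre"
    "stack_run patterns_132_321 inp st = out @ stack_run patterns_132_321 post (d # new @ rest)"
    "st = popped @ rest" "set popped \<subseteq> set out"
    "avoids_all patterns_132_321 (d # new @ rest) \<or> new @ rest = []" "I (d # post) (new @ rest)"
    by (rule stack_run_split_at_push[OF assms(1), of I])
  have "avoids_all patterns_132_321 (d # new @ rest)"
    using split(6) avoids_singleton by auto
  moreover have "distinct (d # post @ new @ rest)" "\<forall>x\<in>set st. \<exists>x'\<in>set (new @ rest). x' \<le> x"
    using split(7) unfolding I_def by auto
  ultimately show thesis by (rule that[OF split(1-5)])
qed

lemma stack_run_132_321_contains_231_of_stack_descent:
  assumes "distinct (inp @ st)" "avoids_all patterns_132_321 st"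
    and "subseq [b, a] st" "a < b" "c \<in> set inp" "b < c"
  shows "contains (stack_run patterns_132_321 inp st) [2, 3, 1]"
proof -
  obtain pre post out new rest popped where split:
    "inp = pre @ c # post" "c \<notin> set pre"
    "stack_run patterns_132_321 inp st = out @ stack_run patterns_132_321 post (c # new @ rest)"
    "st = popped @ rest" "set popped \<subseteq> set out"
    "avoids_all patterns_132_321 (c # new @ rest)" "distinct (c # post @ new @ rest)"
    "\<forall>x\<in>set st. \<exists>x'\<in>set (new @ rest). x' \<le> x"
    by (rule stack_run_132_321_split_at_push[OF assms(5,1,2)])
  have "b \<in> set popped"
  proof (rule ccontr)
    assume "b \<notin> set popped"
    with assms(3) have "subseq [b, a] rest"
      unfolding split(4) by (rule subseq_Cons_append_notin)
    then have "subseq [c, b, a] (c # new @ rest)" by (simp add: subseq_drop_many)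
    moreover have "order_iso [c, b, a] [3, 2, 1]" using assms(4,6) by (auto simp: order_iso_3)
    ultimately show False
      using split(6) contains_subseq unfolding avoids_all_def avoids_def by blast
  qed
  have "a \<in> set st" using set_subseq[OF assms(3)] by simp
  then obtain a' where a': "a' \<in> set (new @ rest)" "a' \<le> a" using split(8) by blast
  have "subseq [b] out" using \<open>b \<in> set popped\<close> split(5) by (auto simp: subseq_singleton_left)
  moreover have "subseq [c, a'] (c # new @ rest)" using a'(1) by (simp add: subseq_singleton_left)
  then have "subseq [c, a'] (stack_run patterns_132_321 post (c # new @ rest))"
    using stack_subseq_stack_run by (rule subseq_order.order_trans)
  ultimately have "subseq [b, c, a'] (stack_run patterns_132_321 inp st)"
    unfolding split(3) using list_emb_append_mono by fastforce
  moreover have "order_iso [b, c, a'] [2, 3, 1]" using assms(4,6) a'(2) by (auto simp: order_iso_3)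
  ultimately show ?thesis by (rule contains_subseq)
qed

lemma stack_run_132_321_contains_231_of_stack_entry:
  assumes "distinct (inp @ st)" "avoids_all patterns_132_321 st"
    and "a \<in> set st" "subseq [b, c] inp" "a < b" "b < c"
  shows "contains (stack_run patterns_132_321 inp st) [2, 3, 1]"
proof -
  have "b \<in> set inp" using set_subseq[OF assms(4)] by simp
  then obtain pre post out new rest popped where split:
    "inp = pre @ b # post" "b \<notin> set pre"
    "stack_run patterns_132_321 inp st = out @ stack_run patterns_132_321 post (b # new @ rest)"
    "st = popped @ rest" "set popped \<subseteq> set out"
    "avoids_all patterns_132_321 (b # new @ rest)" "distinct (b # post @ new @ rest)"
    "\<forall>x\<in>set st. \<exists>x'\<in>set (new @ rest). x' \<le> x"
    using assms(1,2) by (rule stack_run_132_321_split_at_push)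
  have "subseq [b, c] (b # post)"
    using assms(4) split(2) unfolding split(1) by (rule subseq_Cons_append_notin)
  then have "c \<in> set post" by (simp add: subseq_singleton_left)
  obtain a' where a': "a' \<in> set (new @ rest)" "a' \<le> a" using split(8) assms(3) by blast
  have "contains (stack_run patterns_132_321 post (b # new @ rest)) [2, 3, 1]"
  proof (rule stack_run_132_321_contains_231_of_stack_descent)
    show "distinct (post @ b # new @ rest)" using split(7) by auto
    show "subseq [b, a'] (b # new @ rest)" using a'(1) by (simp add: subseq_singleton_left)
    show "a' < b" using a'(2) assms(5) by simp
  qed (fact split(6) \<open>c \<in> set post\<close> assms(6))+
  then show ?thesis unfolding split(3) by (rule contains_append)
qed

lemma s_map_132_321_contains_231_of_contains_123:
  assumes "distinct x" "contains x [1, 2, 3]"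
  shows "contains (s_map patterns_132_321 x) [2, 3, 1]"
proof -
  obtain a b c where abc: "subseq [a, b, c] x" "a < b" "b < c"
    using assms(2) by (auto elim: contains_length_3E simp: order_iso_3)
  have "a \<in> set x" using set_subseq[OF abc(1)] by simp
  moreover have "distinct (x @ [])" using assms(1) by simp
  moreover have "avoids_all patterns_132_321 []" unfolding avoids_all_def by (auto intro: avoids_shorter)
  ultimately obtain pre post out new rest popped where split:
    "x = pre @ a # post" "a \<notin> set pre"
    "stack_run patterns_132_321 x [] = out @ stack_run patterns_132_321 post (a # new @ rest)"
    "[] = popped @ rest" "set popped \<subseteq> set out"
    "avoids_all patterns_132_321 (a # new @ rest)" "distinct (a # post @ new @ rest)"
    "\<forall>y\<in>set []. \<exists>y'\<in>set (new @ rest). y' \<le> y"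
    by (rule stack_run_132_321_split_at_push)
  have "subseq [a, b, c] (a # post)"
    using abc(1) split(2) unfolding split(1) by (rule subseq_Cons_append_notin)
  then have "subseq [b, c] post" by simp
  moreover have "distinct (post @ a # new @ rest)" using split(7) by auto
  ultimately have "contains (stack_run patterns_132_321 post (a # new @ rest)) [2, 3, 1]"
    using stack_run_132_321_contains_231_of_stack_entry[of post "a # new @ rest" a b c] split(6) abc(2,3)
    by simp
  then show ?thesis unfolding s_map_def split(3) by (rule contains_append)
qed

lemma stack_run_21_pops_before_larger:
  assumes "subseq [u, v, w] inp" "u < v"
  shows "subseq [u, w] (stack_run {[2, 1]} inp st)"
proof -
  have "u \<in> set inp" using set_subseq[OF assms(1)] by simp
  obtain pre post out new rest popped where split_u:
    "inp = pre @ u # post" "u \<notin> set pre"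
    "stack_run {[2, 1]} inp st = out @ stack_run {[2, 1]} post (u # new @ rest)"
    "st = popped @ rest" "set popped \<subseteq> set out"
    "avoids_all {[2, 1]} (u # new @ rest) \<or> new @ rest = []" "True"
    by (rule stack_run_split_at_push[where I = "\<lambda>_ _. True", OF \<open>u \<in> set inp\<close> TrueI TrueI TrueI])
  have "subseq [u, v, w] (u # post)"
    using assms(1) split_u(2) unfolding split_u(1) by (rule subseq_Cons_append_notin)
  then have vw: "subseq [v, w] post" by simp
  then have "v \<in> set post" using set_subseq by fastforce
  obtain pre' post' out' new' rest' popped' where split_v:
    "post = pre' @ v # post'" "v \<notin> set pre'"
    "stack_run {[2, 1]} post (u # new @ rest) = out' @ stack_run {[2, 1]} post' (v # new' @ rest')"
    "u # new @ rest = popped' @ rest'" "set popped' \<subseteq> set out'"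
    "avoids_all {[2, 1]} (v # new' @ rest') \<or> new' @ rest' = []" "True"
    by (rule stack_run_split_at_push[where I = "\<lambda>_ _. True", OF \<open>v \<in> set post\<close> TrueI TrueI TrueI])
  have "u \<in> set popped'"
  proof (rule ccontr)
    assume "u \<notin> set popped'"
    then have "u \<in> set rest'" using split_v(4) by (metis list.set_intros(1) Un_iff set_append)
    then have "subseq [v, u] (v # new' @ rest')" by (simp add: subseq_singleton_left)
    moreover have "order_iso [v, u] [2, 1]" using assms(2) by (simp add: order_iso_2)
    ultimately have "contains (v # new' @ rest') [2, 1]" by (rule contains_subseq)
    moreover have "avoids_all {[2, 1]} (v # new' @ rest')" using split_v(6) \<open>u \<in> set rest'\<close> by auto
    ultimately show False unfolding avoids_all_def avoids_def by simp
  qed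
  have "w \<in> set post'"
    using subseq_Cons_append_notin[OF vw[unfolded split_v(1)] split_v(2)] by (simp add: subseq_singleton_left)
  then have "subseq [w] (stack_run {[2, 1]} post' (v # new' @ rest'))"
    by (simp add: set_stack_run subseq_singleton_left)
  moreover have "subseq [u] out'" using \<open>u \<in> set popped'\<close> split_v(5) by (auto simp: subseq_singleton_left)
  ultimately have "subseq [u, w] (out' @ stack_run {[2, 1]} post' (v # new' @ rest'))"
    using list_emb_append_mono by fastforce
  then show ?thesis unfolding split_u(3) split_v(3) by (rule subseq_drop_many)
qed

lemma west_s_not_sorted_of_contains_231:
  assumes "contains y [2, 3, 1]"
  shows "\<not> sorted (west_s y)"
proof
  obtain u v w where uvw: "subseq [u, v, w] y" "w < u" "u < v"
    using assms by (auto elim: contains_length_3E simp: order_iso_3)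
  assume "sorted (west_s y)"
  moreover have "subseq [u, w] (west_s y)"
    unfolding west_s_def s_map_def using uvw(1,3) by (rule stack_run_21_pops_before_larger)
  ultimately have "sorted [u, w]" by (metis sorted_nths subseq_conv_nths)
  then show False using uvw(2) by simp
qed

theorem proposition3p2:
  fixes n :: nat and x :: "nat list"
  assumes "x \<in> Sort2 n [1,3,2] [3,2,1]"
  shows "avoids x [1,2,3]"
  unfolding avoids_def
proof
  have "distinct x" using assms unfolding Sort2_def perms_def by simp
  moreover assume "contains x [1, 2, 3]"
  ultimately have "contains (s_map patterns_132_321 x) [2, 3, 1]"
    by (rule s_map_132_321_contains_231_of_contains_123)
  then have "\<not> sorted (west_s (s_map patterns_132_321 x))"
    by (rule west_s_not_sorted_of_contains_231)
  moreover have "sorted (west_s (s_map patterns_132_321 x))"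
    using assms unfolding Sort2_def by (simp del: upt_Suc)
  ultimately show False by contradiction
qed

end
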